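(* Let $X$ be a finitely primitive countable Markov shift over the alphabet $\mathbb N$, with associated integer $N\ge0$ and finite set $\Lambda$ of admissible strings of length $N$. Let $\phi\colon X\to\mathbb R$ be measurable and $\mu_\phi$ a Gibbs state for $\phi$. Then there exists $c>0$ such that for every $(a,b)\in\mathbb N^2$ and every integer $n>N$, $\mu_\phi([a]\cap\sigma^{-n}[b])\ge c\,\mu_\phi[a]\,\mu_\phi[b]$.
   Context: $\mathbb N=\{0,1,\dots\}$; $A$ is a 0-1 matrix indexed by $\mathbb N$ without zero rows or columns; $X=\{x\in\mathbb N^{\mathbb N}:A_{x_ix_{i+1}}=1\ \forall i\}$ with left shift $\sigma$. $E^n$: admissible strings of length $n$ (consecutive letters $a,b$ satisfy $A_{ab}=1$); $E^*=\bigcup_{n\ge1}E^n$; $[w]=\{x:x_i=w_i,\ i<|w|\}$. $X$ is finitely primitive if there is an integer $N\ge0$ and a finite set $\Lambda$ of admissible strings of common length $N$ (consisting of the empty string if $N=0$) such that for all $i,j\in E^*$ there is $\lambda\in\Lambda$ with $i\lambda j\in E^*$. $S_n\phi=\sum_{i<n}\phi\circ\sigma^i$. Gibbs state: there are $c_0\ge1$, $P\in\mathbb R$ with $c_0^{-1}\le\mu_\phi[x_0,\dots,x_{n-1}]/\exp(-Pn+S_n\phi(x))\le c_0$ for all $n\ge1$, $x\in X$. *)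

theory Defs
  imports "HOL-Probability.Probability"
begin

text \<open>The transition matrix is a 0-1 matrix A indexed by nat, represented as a
  boolean relation: A a b means the entry A_ab equals 1.\<close>

definition no_zero_rows_cols :: "(nat \<Rightarrow> nat \<Rightarrow> bool) \<Rightarrow> bool" where
  "no_zero_rows_cols A \<longleftrightarrow> (\<forall>a. \<exists>b. A a b) \<and> (\<forall>b. \<exists>a. A a b)"

definition shift_space :: "(nat \<Rightarrow> nat \<Rightarrow> bool) \<Rightarrow> (nat \<Rightarrow> nat) set" where
  "shift_space A = {x. \<forall>i. A (x i) (x (Suc i))}"

definition shift :: "(nat \<Rightarrow> nat) \<Rightarrow> (nat \<Rightarrow> nat)" where
  "shift x = (\<lambda>i. x (Suc i))"

definition admissible :: "(nat \<Rightarrow> nat \<Rightarrow> bool) \<Rightarrow> nat list \<Rightarrow> bool" where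
  "admissible A w \<longleftrightarrow> (\<forall>i. Suc i < length w \<longrightarrow> A (w ! i) (w ! Suc i))"

definition Estar :: "(nat \<Rightarrow> nat \<Rightarrow> bool) \<Rightarrow> nat list set" where
  "Estar A = {w. w \<noteq> [] \<and> admissible A w}"

definition cyl :: "(nat \<Rightarrow> nat \<Rightarrow> bool) \<Rightarrow> nat list \<Rightarrow> (nat \<Rightarrow> nat) set" where
  "cyl A w = {x \<in> shift_space A. \<forall>i < length w. x i = w ! i}"

definition finitely_primitive_with ::
  "(nat \<Rightarrow> nat \<Rightarrow> bool) \<Rightarrow> nat \<Rightarrow> nat list set \<Rightarrow> bool" where
  "finitely_primitive_with A N Lam \<longleftrightarrow>
     finite Lam \<and> (\<forall>l \<in> Lam. length l = N \<and> admissible A l) \<and>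
     (\<forall>i \<in> Estar A. \<forall>j \<in> Estar A. \<exists>l \<in> Lam. admissible A (i @ l @ j))"

definition birkhoff_sum :: "((nat \<Rightarrow> nat) \<Rightarrow> real) \<Rightarrow> nat \<Rightarrow> (nat \<Rightarrow> nat) \<Rightarrow> real" where
  "birkhoff_sum \<phi> n x = (\<Sum>i<n. \<phi> ((shift ^^ i) x))"

definition shift_measurable_space :: "(nat \<Rightarrow> nat \<Rightarrow> bool) \<Rightarrow> (nat \<Rightarrow> nat) measure" where
  "shift_measurable_space A =
     restrict_space (Pi\<^sub>M UNIV (\<lambda>_. count_space (UNIV :: nat set))) (shift_space A)"

definition gibbs_state ::
  "(nat \<Rightarrow> nat \<Rightarrow> bool) \<Rightarrow> ((nat \<Rightarrow> nat) \<Rightarrow> real) \<Rightarrow> (nat \<Rightarrow> nat) measure \<Rightarrow> bool" where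
  "gibbs_state A \<phi> \<mu> \<longleftrightarrow>
     prob_space \<mu> \<and> sets \<mu> = sets (shift_measurable_space A) \<and>
     (\<exists>c0 P. c0 \<ge> 1 \<and>
       (\<forall>n \<ge> 1. \<forall>x \<in> shift_space A.
          inverse c0 \<le> measure \<mu> (cyl A (map x [0..<n])) / exp (- P * real n + birkhoff_sum \<phi> n x)
        \<and> measure \<mu> (cyl A (map x [0..<n])) / exp (- P * real n + birkhoff_sum \<phi> n x) \<le> c0))"

end

(*
  The Gibbs inequality makes the measure quasi-Bernoulli: mu[u] mu[v] <= c0^3 mu[uv] whenever
  the cylinder [uv] is nonempty. Split [a] into the cylinders [w] of words of length m = n - N
  starting with a, and use finite primitivity to choose for each w a connecting word l_w in the
  finite set Lambda with w l_w b admissible. The cylinders [w l_w b] are disjoint, lie in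
  [a] and sigma^-n [b], and have measure at least c0^-6 mu[w] mu[l_w] mu[b]; since the finitely
  many mu[l] are bounded below by some delta > 0, summing over w gives the bound with
  c = delta / c0^6.
*)
theory Submission
  imports Defs
begin

lemma funpow_shift: "(shift ^^ k) x = (\<lambda>i. x (i + k))"
  by (induction k arbitrary: x) (auto simp: shift_def)

lemma funpow_shift_in_shift_space: "x \<in> shift_space A \<Longrightarrow> (shift ^^ k) x \<in> shift_space A"
  by (simp add: funpow_shift shift_space_def)

lemma birkhoff_sum_add:
  "birkhoff_sum \<phi> (p + q) x = birkhoff_sum \<phi> p x + birkhoff_sum \<phi> q ((shift ^^ p) x)"
  unfolding birkhoff_sum_def by (induction q) (simp_all add: funpow_add add.commute)

lemma cyl_Nil [simp]: "cyl A [] = shift_space A"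
  by (simp add: cyl_def)

lemma map_upt_eq_if_in_cyl: "x \<in> cyl A w \<Longrightarrow> map x [0..<length w] = w"
  by (auto simp: cyl_def intro: nth_equalityI)

lemma cyl_subset_cyl_take: "cyl A w \<subseteq> cyl A (take k w)"
  by (auto simp: cyl_def)

lemma funpow_shift_in_cyl_drop:
  assumes "x \<in> cyl A (u @ v)"
  shows "(shift ^^ length u) x \<in> cyl A v"
  using assms funpow_shift_in_shift_space[of x A "length u"]
  by (auto simp: cyl_def funpow_shift nth_append)

lemma admissible_if_cyl_nonempty:
  assumes "cyl A w \<noteq> {}"
  shows "admissible A w"
proof -
  obtain x where "x \<in> cyl A w" using assms by blast
  then have x: "x \<in> shift_space A" "\<And>i. i < length w \<Longrightarrow> x i = w ! i"
    by (auto simp: cyl_def)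
  show ?thesis
    unfolding admissible_def
  proof (intro allI impI)
    fix i assume "Suc i < length w"
    then have "w ! i = x i" "w ! Suc i = x (Suc i)" using x(2) by auto
    then show "A (w ! i) (w ! Suc i)" using x(1) by (simp add: shift_space_def)
  qed
qed

lemma cyl_nonempty_if_admissible:
  assumes rows: "\<forall>a. \<exists>b. A a b" and "admissible A w"
  shows "cyl A w \<noteq> {}"
proof -
  define f where "f a = (SOME b. A a b)" for a
  have A_f: "A a (f a)" for a
    using rows unfolding f_def by (metis someI)
  define x where "x i = (if i < length w then w ! i else (f ^^ (i - length w + 1)) (last w))" for i
  have "A (x i) (x (Suc i))" for i
  proof -
    consider "Suc i < length w" | "Suc i = length w" | "length w \<le> i"
      by linarith
    then show ?thesis
    proof cases
      case 1
      then show ?thesis using \<open>admissible A w\<close> by (simp add: x_def admissible_def)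
    next
      case 2
      then have "w \<noteq> []" "i = length w - 1" by auto
      then have "x i = last w" "x (Suc i) = f (last w)"
        using 2 by (auto simp: x_def last_conv_nth)
      then show ?thesis using A_f by simp
    next
      case 3
      then have "x (Suc i) = f (x i)" by (simp add: x_def Suc_diff_le)
      then show ?thesis using A_f by simp
    qed
  qed
  then have "x \<in> cyl A w" by (auto simp: cyl_def shift_space_def x_def)
  then show ?thesis by blast
qed

lemma disjoint_family_on_cyl: "disjoint_family_on (cyl A) {w. length w = m}"
  unfolding disjoint_family_on_def
proof (intro ballI impI)
  fix w w' :: "nat list" assume "w \<in> {w. length w = m}" "w' \<in> {w. length w = m}" "w \<noteq> w'"
  then have "False" if "x \<in> cyl A w" "x \<in> cyl A w'" for x
    using map_upt_eq_if_in_cyl[OF that(1)] map_upt_eq_if_in_cyl[OF that(2)] by simp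
  then show "cyl A w \<inter> cyl A w' = {}" by blast
qed

lemma cyl_eq_UN_admissible_extensions:
  assumes "length u \<le> m"
  shows "cyl A u = (\<Union>w\<in>{w. length w = m \<and> take (length u) w = u \<and> admissible A w}. cyl A w)"
proof (intro equalityI subsetI)
  fix x assume x: "x \<in> cyl A u"
  then have "x \<in> cyl A (map x [0..<m])"
    by (simp add: cyl_def)
  moreover from this have "admissible A (map x [0..<m])"
    by (intro admissible_if_cyl_nonempty) blast
  moreover have "take (length u) (map x [0..<m]) = u"
    using map_upt_eq_if_in_cyl[OF x] assms by (simp add: take_map)
  ultimately show "x \<in> (\<Union>w\<in>{w. length w = m \<and> take (length u) w = u \<and> admissible A w}. cyl A w)"
    by (intro UN_I[of "map x [0..<m]"]) simp_all
next
  fix x assume "x \<in> (\<Union>w\<in>{w. length w = m \<and> take (length u) w = u \<and> admissible A w}. cyl A w)"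
  then obtain w where "x \<in> cyl A w" "take (length u) w = u"
    by blast
  then show "x \<in> cyl A u"
    using cyl_subset_cyl_take[of A w "length u"] by auto
qed

lemma sets_cyl: "cyl A w \<in> sets (shift_measurable_space A)"
proof -
  let ?M = "Pi\<^sub>M UNIV (\<lambda>_. count_space (UNIV :: nat set))"
  have "{x \<in> space ?M. \<forall>i < length w. x i = w ! i} \<in> sets ?M"
    by measurable
  moreover have "cyl A w = shift_space A \<inter> {x \<in> space ?M. \<forall>i < length w. x i = w ! i}"
    by (auto simp: cyl_def space_PiM)
  ultimately show ?thesis
    unfolding shift_measurable_space_def sets_restrict_space by blast
qed

lemma sets_funpow_shift_preimage_cyl:
  "{x \<in> shift_space A. (shift ^^ n) x \<in> cyl A w} \<in> sets (shift_measurable_space A)"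
proof -
  let ?M = "Pi\<^sub>M UNIV (\<lambda>_. count_space (UNIV :: nat set))"
  have "{x \<in> space ?M. \<forall>i < length w. x (i + n) = w ! i} \<in> sets ?M"
    by measurable
  moreover have "{x \<in> shift_space A. (shift ^^ n) x \<in> cyl A w}
      = shift_space A \<inter> {x \<in> space ?M. \<forall>i < length w. x (i + n) = w ! i}"
    by (auto simp: cyl_def space_PiM funpow_shift shift_space_def)
  ultimately show ?thesis
    unfolding shift_measurable_space_def sets_restrict_space by blast
qed

lemma (in finite_measure) measure_UN_scaled_le_measure_UN:
  assumes "countable I" "disjoint_family_on F I" "disjoint_family_on G I"
    and "\<And>i. i \<in> I \<Longrightarrow> F i \<in> sets M" "\<And>i. i \<in> I \<Longrightarrow> G i \<in> sets M"
    and "0 \<le> c" "\<And>i. i \<in> I \<Longrightarrow> c * measure M (F i) \<le> measure M (G i)"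
  shows "c * measure M (\<Union>i\<in>I. F i) \<le> measure M (\<Union>i\<in>I. G i)"
proof -
  have "ennreal c * emeasure M (\<Union>i\<in>I. F i) = (\<integral>\<^sup>+i. ennreal c * emeasure M (F i) \<partial>count_space I)"
    using assms(1,2,4) by (simp add: emeasure_UN_countable nn_integral_cmult)
  also have "\<dots> \<le> (\<integral>\<^sup>+i. emeasure M (G i) \<partial>count_space I)"
    using assms(6,7) by (intro nn_integral_mono) (simp add: emeasure_eq_measure ennreal_mult' [symmetric])
  also have "\<dots> = emeasure M (\<Union>i\<in>I. G i)"
    using assms(1,3,5) by (simp add: emeasure_UN_countable)
  finally show ?thesis
    using assms(6) by (simp add: emeasure_eq_measure ennreal_mult'[symmetric] ennreal_le_iff)
qed

locale gibbs_measure = prob_space \<mu> for \<mu> :: "(nat \<Rightarrow> nat) measure" +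
  fixes A :: "nat \<Rightarrow> nat \<Rightarrow> bool" and \<phi> :: "(nat \<Rightarrow> nat) \<Rightarrow> real" and c0 P :: real
  assumes sets_eq: "sets \<mu> = sets (shift_measurable_space A)"
    and c0_ge_1: "1 \<le> c0"
    and gibbs_ineq: "\<And>n x. 1 \<le> n \<Longrightarrow> x \<in> shift_space A \<Longrightarrow>
      inverse c0 \<le> measure \<mu> (cyl A (map x [0..<n])) / exp (- P * real n + birkhoff_sum \<phi> n x)
      \<and> measure \<mu> (cyl A (map x [0..<n])) / exp (- P * real n + birkhoff_sum \<phi> n x) \<le> c0"

lemma gibbs_state_imp_gibbs_measure:
  assumes "gibbs_state A \<phi> \<mu>"
  obtains c0 P where "gibbs_measure \<mu> A \<phi> c0 P"
proof -
  obtain c0 P where "1 \<le> c0" and "\<forall>n \<ge> 1. \<forall>x \<in> shift_space A.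
      inverse c0 \<le> measure \<mu> (cyl A (map x [0..<n])) / exp (- P * real n + birkhoff_sum \<phi> n x)
      \<and> measure \<mu> (cyl A (map x [0..<n])) / exp (- P * real n + birkhoff_sum \<phi> n x) \<le> c0"
    using assms unfolding gibbs_state_def by blast
  moreover have "prob_space \<mu>" "sets \<mu> = sets (shift_measurable_space A)"
    using assms unfolding gibbs_state_def by auto
  ultimately show ?thesis
    by (intro that) (auto simp: gibbs_measure_def gibbs_measure_axioms_def)
qed

context gibbs_measure
begin

definition weight :: "nat \<Rightarrow> (nat \<Rightarrow> nat) \<Rightarrow> real" where
  "weight n x = exp (- P * real n + birkhoff_sum \<phi> n x)"

lemma weight_pos: "0 < weight n x"
  by (simp add: weight_def)

lemma weight_add: "weight (p + q) x = weight p x * weight q ((shift ^^ p) x)"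
  by (simp add: weight_def birkhoff_sum_add algebra_simps flip: exp_add)

lemma c0_pos: "0 < c0"
  using c0_ge_1 by simp

lemma space_eq: "space \<mu> = shift_space A"
  using sets_eq_imp_space_eq[OF sets_eq]
  by (simp add: shift_measurable_space_def space_PiM space_restrict_space)

lemma cyl_in_events: "cyl A w \<in> events"
  using sets_cyl sets_eq by simp

lemma measure_cyl_Nil: "measure \<mu> (cyl A []) = 1"
  by (simp add: space_eq[symmetric] prob_space)

lemma measure_cyl_bounds:
  assumes "x \<in> cyl A w" "w \<noteq> []"
  shows "weight (length w) x / c0 \<le> measure \<mu> (cyl A w)"
    and "measure \<mu> (cyl A w) \<le> c0 * weight (length w) x"
proof -
  have "1 \<le> length w" "x \<in> shift_space A"
    using assms by (auto simp: cyl_def Suc_le_eq)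
  from gibbs_ineq[OF this] have "inverse c0 \<le> measure \<mu> (cyl A w) / weight (length w) x
      \<and> measure \<mu> (cyl A w) / weight (length w) x \<le> c0"
    unfolding map_upt_eq_if_in_cyl[OF assms(1)] weight_def .
  then show "weight (length w) x / c0 \<le> measure \<mu> (cyl A w)"
    and "measure \<mu> (cyl A w) \<le> c0 * weight (length w) x"
    using weight_pos[of "length w" x] c0_pos by (simp_all add: field_simps)
qed

lemma measure_cyl_pos:
  assumes "cyl A w \<noteq> {}"
  shows "0 < measure \<mu> (cyl A w)"
proof (cases "w = []")
  case True
  then show ?thesis using measure_cyl_Nil by simp
next
  case False
  obtain x where "x \<in> cyl A w" using assms by blast
  then show ?thesis
    using measure_cyl_bounds(1)[OF _ False] weight_pos c0_pos
    by (meson divide_pos_pos less_le_trans)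
qed

lemma quasi_bernoulli:
  assumes "cyl A (u @ v) \<noteq> {}"
  shows "measure \<mu> (cyl A u) * measure \<mu> (cyl A v) \<le> c0 ^ 3 * measure \<mu> (cyl A (u @ v))"
proof -
  have le_scaled: "t \<le> c0 ^ 3 * t" if "0 \<le> t" for t
    using c0_ge_1 that by (metis mult_1 mult_right_mono one_le_power)
  consider "u = []" | "v = []" | "u \<noteq> []" "v \<noteq> []" by blast
  then show ?thesis
  proof cases
    case 1
    then show ?thesis
      using le_scaled measure_cyl_Nil by simp
  next
    case 2
    then show ?thesis
      using le_scaled measure_cyl_Nil by simp
  next
    case 3
    obtain x where x: "x \<in> cyl A (u @ v)" using assms by blast
    let ?y = "(shift ^^ length u) x"
    have xu: "x \<in> cyl A u"
      using x cyl_subset_cyl_take[of A "u @ v" "length u"] by auto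
    have yv: "?y \<in> cyl A v"
      using funpow_shift_in_cyl_drop[OF x] .
    have "measure \<mu> (cyl A u) * measure \<mu> (cyl A v) \<le> (c0 * weight (length u) x) * (c0 * weight (length v) ?y)"
      using measure_cyl_bounds(2)[OF xu 3(1)] measure_cyl_bounds(2)[OF yv 3(2)]
      by (intro mult_mono) (auto simp: less_imp_le[OF weight_pos] less_imp_le[OF c0_pos])
    also have "\<dots> = c0 ^ 3 * (weight (length (u @ v)) x / c0)"
      using c0_pos by (simp add: weight_add power3_eq_cube field_simps)
    also have "\<dots> \<le> c0 ^ 3 * measure \<mu> (cyl A (u @ v))"
      using measure_cyl_bounds(1)[OF x] 3 c0_pos by (intro mult_left_mono) auto
    finally show ?thesis .
  qed
qed

lemma quasi_bernoulli3:
  assumes "cyl A (w @ l @ v) \<noteq> {}"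
  shows "measure \<mu> (cyl A w) * measure \<mu> (cyl A l) * measure \<mu> (cyl A v)
    \<le> c0 ^ 6 * measure \<mu> (cyl A (w @ l @ v))"
proof -
  have "cyl A (l @ v) \<noteq> {}"
    using assms funpow_shift_in_cyl_drop[of _ A w "l @ v"] by blast
  then have "measure \<mu> (cyl A w) * (measure \<mu> (cyl A l) * measure \<mu> (cyl A v))
      \<le> measure \<mu> (cyl A w) * (c0 ^ 3 * measure \<mu> (cyl A (l @ v)))"
    by (intro mult_left_mono quasi_bernoulli) auto
  also have "\<dots> = c0 ^ 3 * (measure \<mu> (cyl A w) * measure \<mu> (cyl A (l @ v)))"
    by simp
  also have "\<dots> \<le> c0 ^ 3 * (c0 ^ 3 * measure \<mu> (cyl A (w @ l @ v)))"
    using quasi_bernoulli[OF assms] c0_pos by (intro mult_left_mono) auto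
  finally show ?thesis
    by (simp add: mult.assoc flip: power_add)
qed

lemma measure_cyl_uniformly_pos:
  assumes "finite L" "\<And>l. l \<in> L \<Longrightarrow> cyl A l \<noteq> {}"
  obtains \<delta> where "0 < \<delta>" "\<And>l. l \<in> L \<Longrightarrow> \<delta> \<le> measure \<mu> (cyl A l)"
proof
  let ?\<delta> = "Min (insert 1 ((\<lambda>l. measure \<mu> (cyl A l)) ` L))"
  show "0 < ?\<delta>"
    using assms measure_cyl_pos by auto
  show "?\<delta> \<le> measure \<mu> (cyl A l)" if "l \<in> L" for l
    using assms(1) that by auto
qed

lemma measure_cyl_connected_ge:
  assumes rows: "\<forall>a. \<exists>b. A a b" and "admissible A (w @ l @ v)"
    and "\<delta> \<le> measure \<mu> (cyl A l)"
  shows "\<delta> / c0 ^ 6 * measure \<mu> (cyl A v) * measure \<mu> (cyl A w) \<le> measure \<mu> (cyl A (w @ l @ v))"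
proof -
  have "\<delta> * (measure \<mu> (cyl A w) * measure \<mu> (cyl A v))
      \<le> measure \<mu> (cyl A l) * (measure \<mu> (cyl A w) * measure \<mu> (cyl A v))"
    using assms(3) by (rule mult_right_mono) simp
  also have "\<dots> = measure \<mu> (cyl A w) * measure \<mu> (cyl A l) * measure \<mu> (cyl A v)"
    by (simp add: ac_simps)
  also have "\<dots> \<le> c0 ^ 6 * measure \<mu> (cyl A (w @ l @ v))"
    using assms(2) by (intro quasi_bernoulli3 cyl_nonempty_if_admissible rows)
  finally show ?thesis
    using c0_pos by (simp add: field_simps)
qed

lemma measure_UN_connected_cyl_ge:
  assumes rows: "\<forall>a. \<exists>b. A a b" and "W \<subseteq> {w. length w = m}" and "0 \<le> \<delta>"
    and "\<And>w. w \<in> W \<Longrightarrow> admissible A (w @ lam w @ v) \<and> \<delta> \<le> measure \<mu> (cyl A (lam w))"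
  shows "\<delta> / c0 ^ 6 * measure \<mu> (cyl A v) * measure \<mu> (\<Union>w\<in>W. cyl A w)
    \<le> measure \<mu> (\<Union>w\<in>W. cyl A (w @ lam w @ v))"
proof (rule measure_UN_scaled_le_measure_UN)
  have connected_subset: "cyl A (w @ lam w @ v) \<subseteq> cyl A w" for w
    using cyl_subset_cyl_take[of A "w @ lam w @ v" "length w"] by simp
  have "disjoint_family_on (cyl A) W"
    using assms(2) disjoint_family_on_cyl by (rule disjoint_family_on_mono)
  then show "disjoint_family_on (cyl A) W" "disjoint_family_on (\<lambda>w. cyl A (w @ lam w @ v)) W"
    using connected_subset unfolding disjoint_family_on_def by blast+
qed (use assms measure_cyl_connected_ge c0_pos cyl_in_events in auto)

lemma measure_cyl_inter_funpow_shift_cyl_ge: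
  assumes rows: "\<forall>a. \<exists>b. A a b" and primitive: "finitely_primitive_with A N Lam"
    and \<delta>: "0 \<le> \<delta>" "\<And>l. l \<in> Lam \<Longrightarrow> \<delta> \<le> measure \<mu> (cyl A l)"
    and "N < n"
  shows "\<delta> / c0 ^ 6 * measure \<mu> (cyl A [a]) * measure \<mu> (cyl A [b])
    \<le> measure \<mu> (cyl A [a] \<inter> {x \<in> shift_space A. (shift ^^ n) x \<in> cyl A [b]})"
    (is "_ \<le> measure \<mu> ?T")
proof -
  define m where "m = n - N"
  define W where "W = {w. length w = m \<and> take 1 w = [a] \<and> admissible A w}"
  have "1 \<le> m"
    using \<open>N < n\<close> by (simp add: m_def)
  have "\<exists>l \<in> Lam. admissible A (w @ l @ [b])" if "w \<in> W" for w
  proof -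
    have "w \<in> Estar A" "[b] \<in> Estar A"
      using that \<open>1 \<le> m\<close> by (auto simp: W_def Estar_def admissible_def)
    then show ?thesis
      using primitive unfolding finitely_primitive_with_def by blast
  qed
  then obtain lam where lam: "\<And>w. w \<in> W \<Longrightarrow> lam w \<in> Lam \<and> admissible A (w @ lam w @ [b])"
    by metis
  have cyl_a: "cyl A [a] = (\<Union>w\<in>W. cyl A w)"
    using cyl_eq_UN_admissible_extensions[of "[a]" m A] \<open>1 \<le> m\<close> by (simp add: W_def)
  have "(\<Union>w\<in>W. cyl A (w @ lam w @ [b])) \<subseteq> ?T"
  proof safe
    fix w x assume w: "w \<in> W" and x: "x \<in> cyl A (w @ lam w @ [b])"
    then show "x \<in> cyl A [a]" "x \<in> shift_space A"
      using cyl_subset_cyl_take[of A "w @ lam w @ [b]" "length w"] cyl_a by (auto simp: cyl_def)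
    have "length (w @ lam w) = n"
      using w lam[OF w] primitive \<open>N < n\<close>
      by (auto simp: W_def m_def finitely_primitive_with_def)
    then show "(shift ^^ n) x \<in> cyl A [b]"
      using funpow_shift_in_cyl_drop[of x A "w @ lam w" "[b]"] x by simp
  qed
  moreover have "?T \<in> events"
    using sets_cyl sets_funpow_shift_preimage_cyl sets_eq by auto
  ultimately have "measure \<mu> (\<Union>w\<in>W. cyl A (w @ lam w @ [b])) \<le> measure \<mu> ?T"
    by (rule finite_measure_mono)
  moreover have "\<delta> / c0 ^ 6 * measure \<mu> (cyl A [b]) * measure \<mu> (\<Union>w\<in>W. cyl A w)
      \<le> measure \<mu> (\<Union>w\<in>W. cyl A (w @ lam w @ [b]))"
    using lam \<delta> by (intro measure_UN_connected_cyl_ge[OF rows, of _ m]) (auto simp: W_def)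
  ultimately show ?thesis
    unfolding cyl_a by (simp add: algebra_simps)
qed

end

theorem lemma2p5:
  fixes A :: "nat \<Rightarrow> nat \<Rightarrow> bool" and N :: nat and Lam :: "nat list set"
    and \<phi> :: "(nat \<Rightarrow> nat) \<Rightarrow> real" and \<mu> :: "(nat \<Rightarrow> nat) measure"
  assumes "no_zero_rows_cols A"
    and "finitely_primitive_with A N Lam"
    and "\<phi> \<in> borel_measurable (shift_measurable_space A)"
    and "gibbs_state A \<phi> \<mu>"
  shows "\<exists>c > 0. \<forall>a b n. n > N \<longrightarrow>
           measure \<mu> (cyl A [a] \<inter> {x \<in> shift_space A. (shift ^^ n) x \<in> cyl A [b]})
             \<ge> c * measure \<mu> (cyl A [a]) * measure \<mu> (cyl A [b])"
proof -
  obtain c0 P where "gibbs_measure \<mu> A \<phi> c0 P"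
    using gibbs_state_imp_gibbs_measure[OF assms(4)] .
  then interpret gibbs_measure \<mu> A \<phi> c0 P .
  have rows: "\<forall>a. \<exists>b. A a b"
    using assms(1) by (simp add: no_zero_rows_cols_def)
  have Lam: "finite Lam" "\<And>l. l \<in> Lam \<Longrightarrow> cyl A l \<noteq> {}"
    using assms(2) cyl_nonempty_if_admissible[OF rows]
    by (auto simp: finitely_primitive_with_def)
  obtain \<delta> where \<delta>: "0 < \<delta>" "\<And>l. l \<in> Lam \<Longrightarrow> \<delta> \<le> measure \<mu> (cyl A l)"
    using measure_cyl_uniformly_pos[OF Lam] by blast
  have "0 < \<delta> / c0 ^ 6"
    using \<delta>(1) c0_pos by simp
  moreover note measure_cyl_inter_funpow_shift_cyl_ge[OF rows assms(2) less_imp_le[OF \<delta>(1)] \<delta>(2)]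
  ultimately show ?thesis
    by (intro exI[of _ "\<delta> / c0 ^ 6"]) auto
qed

end
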